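(* Let $d=2$. There is a constant $c_2$ depending only on the dimension such that for all $N\ge2$, $$\text{i) } E_Q(Z(N)^2)\le \sum_{n=0}^N\left(c_2c^2_{N,2}\log N\right)^n,\qquad \text{ii) } E_Q(K(N)^2)\le N^2\sum_{n=0}^N\left(c_2c^2_{N,2}\log N\right)^n.$$
   Context: $P^N_0$ is the uniform probability measure on nearest-neighbour walks $\omega:\{0,\dots,N\}\to\mathbb{Z}^2$ with $\omega(0)=0$, $|\omega(n)-\omega(n-1)|=1$ (each of weight $4^{-N}$). The environment $h=\{h(n,x):n\in\mathbb{N},x\in\mathbb{Z}^2\}$ consists of i.i.d. random variables with $h(n,x)=\pm1$ each with probability $1/2$ on a probability space $(H,\mathcal{G},Q)$, independent of the walk; $E_Q$ is expectation under $Q$. $(c_{N,2})$ is a sequence of positive numbers with $\lim_{N\to\infty}c_{N,2}^2\log N=0$. $Z(N)=\int\prod_{n=1}^N[1+c_{N,2}h(n,\omega(n))]\,dP^N_0(\omega)$ and $K(N)=\int\prod_{n=1}^N[1+c_{N,2}h(n,\omega(n))]\,|\omega(N)|^2\,dP^N_0(\omega)$. *)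

theory Defs
  imports "HOL-Probability.Probability"
begin

text \<open>Nearest-neighbour walks of length N in Z^2 started at 0, as functions
  on nat, normalised to (0,0) after time N so that the set is finite.\<close>
definition walks :: "nat \<Rightarrow> (nat \<Rightarrow> int \<times> int) set" where
  "walks N = {w. w 0 = (0,0)
     \<and> (\<forall>n\<in>{1..N}. (fst (w n) - fst (w (n-1)))^2 + (snd (w n) - snd (w (n-1)))^2 = 1)
     \<and> (\<forall>n>N. w n = (0,0))}"

text \<open>Environment: a configuration h(n,x) = eta (n,x).  Q is the product of
  uniform measures on {-1,1} over all sites (n,x) (canonical i.i.d. realisation).\<close>
definition Qenv :: "(nat \<times> (int \<times> int) \<Rightarrow> real) measure" where
  "Qenv = PiM UNIV (\<lambda>_. measure_pmf (pmf_of_set {-1, 1::real}))"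

text \<open>Z(N) and K(N): integrals against the uniform measure P^N_0 (weight 4^(-N)).\<close>
definition Zpart :: "(nat \<Rightarrow> real) \<Rightarrow> nat \<Rightarrow> (nat \<times> (int \<times> int) \<Rightarrow> real) \<Rightarrow> real" where
  "Zpart c N eta = (\<Sum>w\<in>walks N. (\<Prod>n=1..N. 1 + c N * eta (n, w n)) / 4 ^ N)"

definition Kpart :: "(nat \<Rightarrow> real) \<Rightarrow> nat \<Rightarrow> (nat \<times> (int \<times> int) \<Rightarrow> real) \<Rightarrow> real" where
  "Kpart c N eta = (\<Sum>w\<in>walks N. (\<Prod>n=1..N. 1 + c N * eta (n, w n))
      * (real_of_int (fst (w N))^2 + real_of_int (snd (w N))^2) / 4 ^ N)"

end

theory Submission
  imports Defs
begin

text \<open>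
  Expanding the square and integrating out the independent signs \<open>h(n,x) = \<plusminus>1\<close> turns
  \<open>E\<^sub>Q Z(N)\<^sup>2\<close> into the expectation, over two independent walks, of
  \<open>\<Prod>\<^sub>n (1 + c\<^sub>N\<^sup>2 [\<omega>(n) = \<omega>'(n)])\<close>; this is computed by iterating a transfer operator on
  pairs of positions. When the observable depends only on the difference of the two
  positions, this becomes a renewal equation driven by the probability that the two walks meet
  at time \<open>m\<close>. Rotating \<open>\<int>\<^sup>2\<close> by 45 degrees factorises the difference walk into two independent
  lazy one-dimensional walks, so this probability is the square of a normalised central binomial
  coefficient and hence at most \<open>1/m\<close>. The renewal equation then yields a geometric series with
  ratio \<open>c\<^sub>N\<^sup>2\<close> times a harmonic sum, which is at most \<open>3 log N\<close>.

  For \<open>K(N)\<close> the weight \<open>|\<omega>(N)|\<^sup>2 |\<omega>'(N)|\<^sup>2\<close> is split into its collision-free evolution, which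
  contributes \<open>N\<^sup>2\<close>, and the contributions of the collision times. At a collision the two walks
  are at the same site, and \<open>(|x + y|\<^sup>2 + 12 r)\<^sup>2\<close> is a supersolution in the centre-of-mass variable
  \<open>x + y\<close>; this gives \<open>E\<^sub>Q K(N)\<^sup>2 \<le> N\<^sup>2 + 9 N\<^sup>2 (E\<^sub>Q Z(N)\<^sup>2 - 1)\<close>.
\<close>

section \<open>Walks as sequences of unit steps\<close>

definition unit_steps :: "(int \<times> int) set" where
  "unit_steps = {(1,0), (-1,0), (0,1), (0,-1)}"

lemma sum_unit_steps: "(\<Sum>s\<in>unit_steps. f s) = f (1,0) + f (-1,0) + f (0,1) + f (0,-1)"
  by (simp add: unit_steps_def add.assoc)

lemma card_unit_steps: "card unit_steps = 4"
  by (simp add: unit_steps_def)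

lemma sum_squares_eq_1_iff: "(a::int)^2 + b^2 = 1 \<longleftrightarrow> (a,b) \<in> unit_steps"
proof
  assume h: "a^2 + b^2 = 1"
  then have "a^2 \<le> 1" "b^2 \<le> 1"
    using zero_le_power2[of a] zero_le_power2[of b] by linarith+
  then have "a \<in> {-1,0,1}" "b \<in> {-1,0,1}"
    by (auto simp: abs_square_le_1)
  then show "(a,b) \<in> unit_steps" using h by (auto simp: unit_steps_def)
qed (auto simp: unit_steps_def)

lemma unit_step_iff: "(fst z)^2 + (snd z)^2 = 1 \<longleftrightarrow> z \<in> unit_steps"
  using sum_squares_eq_1_iff[of "fst z" "snd z"] by simp

definition walk_cons :: "int \<times> int \<Rightarrow> (nat \<Rightarrow> int \<times> int) \<Rightarrow> nat \<Rightarrow> nat \<Rightarrow> int \<times> int" where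
  "walk_cons s w N n = (if n = 0 then (0,0) else if n \<le> Suc N then s + w (n - 1) else (0,0))"

lemma walks_0: "walks 0 = {\<lambda>_. (0,0)}"
  unfolding walks_def by (auto simp: fun_eq_iff) (metis neq0_conv)

lemma walk_cons_in_walks:
  assumes s: "s \<in> unit_steps" and w: "w \<in> walks N"
  shows "walk_cons s w N \<in> walks (Suc N)"
  unfolding walks_def
proof (intro CollectI conjI ballI allI impI)
  have w0: "w 0 = (0,0)" and ws: "\<And>n. n \<in> {1..N} \<Longrightarrow>
      (fst (w n) - fst (w (n-1)))^2 + (snd (w n) - snd (w (n-1)))^2 = 1"
    using w unfolding walks_def by auto
  fix n assume n: "n \<in> {1..Suc N}"
  show "(fst (walk_cons s w N n) - fst (walk_cons s w N (n-1)))^2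
      + (snd (walk_cons s w N n) - snd (walk_cons s w N (n-1)))^2 = 1"
  proof (cases "n = 1")
    case True
    then show ?thesis using s w0 unit_step_iff[of s] by (simp add: walk_cons_def)
  next
    case False
    then have "n - 1 \<in> {1..N}" "n - 1 - 1 = n - 2" using n by auto
    then show ?thesis using ws[of "n-1"] n False by (simp add: walk_cons_def)
  qed
qed (simp_all add: walk_cons_def)

lemma walks_SucE:
  assumes v: "v \<in> walks (Suc N)"
  obtains s w where "s \<in> unit_steps" "w \<in> walks N" "v = walk_cons s w N"
proof
  have v0: "v 0 = (0,0)" and vs: "\<And>n. n \<in> {1..Suc N} \<Longrightarrow>
      (fst (v n) - fst (v (n-1)))^2 + (snd (v n) - snd (v (n-1)))^2 = 1"
    and vN: "\<And>n. n > Suc N \<Longrightarrow> v n = (0,0)"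
    using v unfolding walks_def by auto
  define w where "w n = (if n \<le> N then v (Suc n) - v 1 else (0,0))" for n
  show "v 1 \<in> unit_steps"
    using vs[of 1] v0 unit_step_iff by simp
  show "w \<in> walks N"
    unfolding walks_def
  proof (intro CollectI conjI ballI allI impI)
    fix n assume n: "n \<in> {1..N}"
    then have "w n = v (Suc n) - v 1" "w (n-1) = v n - v 1" by (auto simp: w_def)
    then show "(fst (w n) - fst (w (n-1)))^2 + (snd (w n) - snd (w (n-1)))^2 = 1"
      using vs[of "Suc n"] n by simp
  qed (simp_all add: w_def zero_prod_def[symmetric])
  show "v = walk_cons (v 1) w N"
  proof
    fix n
    consider "n = 0" | "0 < n" "n \<le> Suc N" | "Suc N < n" by linarith
    then show "v n = walk_cons (v 1) w N n"
    proof cases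
      case 2
      then have "Suc (n - 1) = n" "n - 1 \<le> N" by simp_all
      then show ?thesis using 2 by (simp add: walk_cons_def w_def)
    qed (simp_all add: walk_cons_def v0 vN)
  qed
qed

lemma walks_Suc: "walks (Suc N) = (\<lambda>(s,w). walk_cons s w N) ` (unit_steps \<times> walks N)"
  by (auto elim!: walks_SucE intro: walk_cons_in_walks)

lemma walk_cons_inj: "inj_on (\<lambda>(s,w). walk_cons s w N) (unit_steps \<times> walks N)"
proof (rule inj_onI, clarify)
  fix s w s' w'
  assume w: "w \<in> walks N" and w': "w' \<in> walks N" and eq: "walk_cons s w N = walk_cons s' w' N"
  have w0: "w 0 = (0,0)" "w' 0 = (0,0)" using w w' unfolding walks_def by auto
  have "walk_cons s w N 1 = walk_cons s' w' N 1" using eq by simp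
  then have ss: "s = s'" using w0 by (simp add: walk_cons_def zero_prod_def[symmetric])
  have "w n = w' n" for n
  proof (cases "n \<le> N")
    case True
    have "walk_cons s w N (Suc n) = walk_cons s' w' N (Suc n)" using eq by simp
    then show ?thesis using True ss by (simp add: walk_cons_def)
  next
    case False then show ?thesis using w w' unfolding walks_def by auto
  qed
  then show "s = s' \<and> w = w'" using ss by auto
qed

lemma sum_walks_Suc:
  "(\<Sum>w\<in>walks (Suc N). F w) = (\<Sum>s\<in>unit_steps. \<Sum>v\<in>walks N. F (walk_cons s v N))"
  unfolding walks_Suc
  by (simp add: sum.reindex[OF walk_cons_inj] sum.cartesian_product prod.case_distrib)

section \<open>Second moments over the environment\<close>

lemma (in product_prob_space)
  fixes f :: "'i \<Rightarrow> 'a \<Rightarrow> 'b::{real_normed_field,banach,second_countable_topology}"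
  assumes J: "finite J" "J \<subseteq> I" and int: "\<And>j. j \<in> J \<Longrightarrow> integrable (M j) (f j)"
  shows integrable_PiM_prod_components: "integrable (PiM I M) (\<lambda>x. \<Prod>j\<in>J. f j (x j))"
    and integral_PiM_prod_components:
      "(\<integral>x. (\<Prod>j\<in>J. f j (x j)) \<partial>PiM I M) = (\<Prod>j\<in>J. integral\<^sup>L (M j) (f j))"
proof -
  define F where "F x = (\<Prod>j\<in>J. f j (x j))" for x
  have restrict: "(\<lambda>x. restrict x J) \<in> measurable (PiM I M) (PiM J M)"
    by (rule measurable_restrict_subset[OF J(2)])
  have distr: "distr (PiM I M) (PiM J M) (\<lambda>x. restrict x J) = PiM J M"
    using J by (rule distr_PiM_restrict_finite)
  have F_restrict: "F (restrict x J) = (\<Prod>j\<in>J. f j (x j))" for x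
    unfolding F_def by (intro prod.cong) auto
  have measurable_F: "F \<in> borel_measurable (PiM J M)"
    unfolding F_def
  proof (rule borel_measurable_prod[where f="\<lambda>j x. f j (x j)"])
    fix j assume j: "j \<in> J"
    show "(\<lambda>x. f j (x j)) \<in> borel_measurable (PiM J M)"
      using measurable_component_singleton[OF j] borel_measurable_integrable[OF int[OF j]]
      by (rule measurable_compose)
  qed
  have "integrable (distr (PiM I M) (PiM J M) (\<lambda>x. restrict x J)) F"
    unfolding distr F_def using J int by (intro product_integrable_prod) auto
  then show "integrable (PiM I M) (\<lambda>x. \<Prod>j\<in>J. f j (x j))"
    unfolding integrable_distr_eq[OF restrict measurable_F] F_restrict .
  have "(\<integral>x. F (restrict x J) \<partial>PiM I M) = (\<integral>x. F x \<partial>PiM J M)"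
    using integral_distr[OF restrict measurable_F] unfolding distr by simp
  also have "\<dots> = (\<Prod>j\<in>J. integral\<^sup>L (M j) (f j))"
    unfolding F_def using J int by (intro product_integral_prod) auto
  finally show "(\<integral>x. (\<Prod>j\<in>J. f j (x j)) \<partial>PiM I M) = (\<Prod>j\<in>J. integral\<^sup>L (M j) (f j))"
    unfolding F_restrict .
qed

lemma
  fixes J :: "(nat \<times> (int \<times> int)) set" and \<phi> :: "nat \<times> (int \<times> int) \<Rightarrow> real \<Rightarrow> real"
  assumes J: "finite J"
  shows integrable_Qenv_prod: "integrable Qenv (\<lambda>\<eta>. \<Prod>j\<in>J. \<phi> j (\<eta> j))"
    and integral_Qenv_prod: "(\<integral>\<eta>. (\<Prod>j\<in>J. \<phi> j (\<eta> j)) \<partial>Qenv) = (\<Prod>j\<in>J. (\<phi> j (-1) + \<phi> j 1) / 2)"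
proof -
  interpret product_prob_space "\<lambda>_. measure_pmf (pmf_of_set {-1, 1::real})" UNIV
    by (intro product_prob_spaceI) (rule prob_space_measure_pmf)
  have int: "integrable (measure_pmf (pmf_of_set {-1, 1::real})) (\<phi> j)" for j
    by (rule integrable_measure_pmf_finite) simp
  show "integrable Qenv (\<lambda>\<eta>. \<Prod>j\<in>J. \<phi> j (\<eta> j))"
    unfolding Qenv_def using J int by (intro integrable_PiM_prod_components) auto
  show "(\<integral>\<eta>. (\<Prod>j\<in>J. \<phi> j (\<eta> j)) \<partial>Qenv) = (\<Prod>j\<in>J. (\<phi> j (-1) + \<phi> j 1) / 2)"
    unfolding Qenv_def using J int
    by (subst integral_PiM_prod_components) (auto simp: integral_pmf_of_set intro!: prod.cong)
qed

lemma prod_union_restrict_inter: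
  assumes "finite (A \<union> B)"
  shows "(\<Prod>j\<in>A \<union> B. if j \<in> A \<inter> B then f j else 1) = prod f (A \<inter> B)"
proof -
  have "(A \<union> B) \<inter> (A \<inter> B) = A \<inter> B" by blast
  then show ?thesis using prod.inter_restrict[OF assms, of f "A \<inter> B"] by simp
qed
lemma prod_mult_prod_eq_prod_union:
  fixes f :: "'a \<Rightarrow> 'b::comm_monoid_mult"
  assumes "finite A" "finite B"
  shows "prod f A * prod f B = (\<Prod>j\<in>A \<union> B. f j * (if j \<in> A \<inter> B then f j else 1))"
proof -
  have "prod f A * prod f B = prod f (A \<union> B) * prod f (A \<inter> B)"
    using assms by (rule prod.union_inter[symmetric])
  also have "\<dots> = (\<Prod>j\<in>A \<union> B. f j * (if j \<in> A \<inter> B then f j else 1))"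
    using assms by (simp only: prod.distrib prod_union_restrict_inter finite_UnI)
  finally show ?thesis .
qed

lemma prod_graph_inter:
  assumes "finite A"
  shows "(\<Prod>j\<in>(\<lambda>n. (n, w n)) ` A \<inter> (\<lambda>n. (n, w' n)) ` A. f j)
    = (\<Prod>n\<in>A. if w n = w' n then f (n, w n) else 1)"
proof -
  have image: "(\<lambda>n. (n, w n)) ` A \<inter> (\<lambda>n. (n, w' n)) ` A = (\<lambda>n. (n, w n)) ` (A \<inter> {n. w n = w' n})"
    by auto
  have "(\<Prod>j\<in>(\<lambda>n. (n, w n)) ` A \<inter> (\<lambda>n. (n, w' n)) ` A. f j) = (\<Prod>n\<in>A \<inter> {n. w n = w' n}. f (n, w n))"
    unfolding image by (subst prod.reindex) (auto simp: inj_on_def)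
  also have "\<dots> = (\<Prod>n\<in>A. if n \<in> {n. w n = w' n} then f (n, w n) else 1)"
    using assms by (rule prod.inter_restrict)
  finally show ?thesis by simp
qed

lemma
  fixes w w' :: "nat \<Rightarrow> int \<times> int" and c :: real
  shows integrable_Qenv_two_walks:
      "integrable Qenv (\<lambda>\<eta>. (\<Prod>n=1..N. 1 + c * \<eta> (n, w n)) * (\<Prod>n=1..N. 1 + c * \<eta> (n, w' n)))"
    and integral_Qenv_two_walks:
      "(\<integral>\<eta>. (\<Prod>n=1..N. 1 + c * \<eta> (n, w n)) * (\<Prod>n=1..N. 1 + c * \<eta> (n, w' n)) \<partial>Qenv)
       = (\<Prod>n=1..N. 1 + c^2 * (if w n = w' n then 1 else 0))"
proof -
  define G where "G = (\<lambda>n. (n, w n)) ` {1..N}"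
  define G' where "G' = (\<lambda>n. (n, w' n)) ` {1..N}"
  define \<phi> where "\<phi> j u = (1 + c * u) * (if j \<in> G \<inter> G' then 1 + c * u else 1)" for j and u :: real
  have fin: "finite G" "finite G'" "finite (G \<union> G')" unfolding G_def G'_def by auto
  have graph: "(\<Prod>n=1..N. 1 + c * \<eta> (n, v n)) = (\<Prod>j\<in>(\<lambda>n. (n, v n)) ` {1..N}. 1 + c * \<eta> j)"
    for \<eta> and v :: "nat \<Rightarrow> int \<times> int"
    by (simp add: prod.reindex inj_on_def)
  have split: "(\<Prod>n=1..N. 1 + c * \<eta> (n, w n)) * (\<Prod>n=1..N. 1 + c * \<eta> (n, w' n))
      = (\<Prod>j\<in>G \<union> G'. \<phi> j (\<eta> j))" for \<eta>
    unfolding graph G_def[symmetric] G'_def[symmetric] \<phi>_def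
    using fin(1,2) by (rule prod_mult_prod_eq_prod_union)
  show "integrable Qenv (\<lambda>\<eta>. (\<Prod>n=1..N. 1 + c * \<eta> (n, w n)) * (\<Prod>n=1..N. 1 + c * \<eta> (n, w' n)))"
    unfolding split using fin(3) by (rule integrable_Qenv_prod)
  have "(\<integral>\<eta>. (\<Prod>n=1..N. 1 + c * \<eta> (n, w n)) * (\<Prod>n=1..N. 1 + c * \<eta> (n, w' n)) \<partial>Qenv)
      = (\<Prod>j\<in>G \<union> G'. (\<phi> j (-1) + \<phi> j 1) / 2)"
    unfolding split using fin(3) by (rule integral_Qenv_prod)
  also have "\<dots> = (\<Prod>j\<in>G \<union> G'. if j \<in> G \<inter> G' then 1 + c^2 else 1)"
    by (intro prod.cong refl) (simp add: \<phi>_def power2_eq_square algebra_simps)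
  also have "\<dots> = (\<Prod>j\<in>G \<inter> G'. 1 + c^2)"
    using fin(3) by (rule prod_union_restrict_inter)
  also have "\<dots> = (\<Prod>n=1..N. 1 + c^2 * (if w n = w' n then 1 else 0))"
    unfolding G_def G'_def by (subst prod_graph_inter) (auto intro: prod.cong)
  finally show "(\<integral>\<eta>. (\<Prod>n=1..N. 1 + c * \<eta> (n, w n)) * (\<Prod>n=1..N. 1 + c * \<eta> (n, w' n)) \<partial>Qenv)
      = (\<Prod>n=1..N. 1 + c^2 * (if w n = w' n then 1 else 0))" .
qed

lemma integral_Qenv_walk_sum_square:
  fixes h :: "(nat \<Rightarrow> int \<times> int) \<Rightarrow> real" and c :: real
  shows "(\<integral>\<eta>. (\<Sum>w\<in>walks N. (\<Prod>n=1..N. 1 + c * \<eta> (n, w n)) * h w / 4^N)^2 \<partial>Qenv)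
    = (\<Sum>w\<in>walks N. \<Sum>w'\<in>walks N.
        (\<Prod>n=1..N. 1 + c^2 * (if w n = w' n then 1 else 0)) * (h w * h w')) / 16^N"
proof -
  let ?P = "\<lambda>w \<eta>. (\<Prod>n=1..N. 1 + c * \<eta> (n, w n))"
  have "(4::real)^N * 4^N = 16^N" by (simp add: power_mult_distrib[symmetric])
  then have square: "(\<Sum>w\<in>walks N. ?P w \<eta> * h w / 4^N)^2
      = (\<Sum>w\<in>walks N. \<Sum>w'\<in>walks N. (h w * h w' / 16^N) * (?P w \<eta> * ?P w' \<eta>))" for \<eta>
    unfolding power2_eq_square sum_product by (intro sum.cong refl) (simp add: field_simps)
  have "(\<integral>\<eta>. (\<Sum>w\<in>walks N. ?P w \<eta> * h w / 4^N)^2 \<partial>Qenv)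
      = (\<Sum>w\<in>walks N. \<Sum>w'\<in>walks N. (h w * h w' / 16^N) * (\<integral>\<eta>. ?P w \<eta> * ?P w' \<eta> \<partial>Qenv))"
    unfolding square using integrable_Qenv_two_walks[where N=N and c=c]
    by (simp add: integral_sum del: times_divide_eq_left)
  also have "\<dots> = (\<Sum>w\<in>walks N. \<Sum>w'\<in>walks N.
      (\<Prod>n=1..N. 1 + c^2 * (if w n = w' n then 1 else 0)) * (h w * h w')) / 16^N"
    unfolding integral_Qenv_two_walks by (simp add: sum_divide_distrib algebra_simps)
  finally show ?thesis .
qed

section \<open>The transfer operator of a pair of walks\<close>

definition pair_op :: "real \<Rightarrow> (int \<times> int \<Rightarrow> int \<times> int \<Rightarrow> real) \<Rightarrow> int \<times> int \<Rightarrow> int \<times> int \<Rightarrow> real" where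
  "pair_op t f x y = (\<Sum>s\<in>unit_steps. \<Sum>s'\<in>unit_steps.
      (1 + t * (if x + s = y + s' then 1 else 0)) * f (x + s) (y + s')) / 16"

lemma pair_op_add: "pair_op t (\<lambda>x y. f x y + g x y) x y = pair_op t f x y + pair_op t g x y"
  unfolding pair_op_def by (simp add: sum.distrib algebra_simps add_divide_distrib)

lemma pair_op_cmult: "pair_op t (\<lambda>x y. c * f x y) x y = c * pair_op t f x y"
  unfolding pair_op_def by (simp add: sum_distrib_left algebra_simps)

lemma pair_op_mono: "t \<ge> 0 \<Longrightarrow> (\<And>x y. f x y \<le> g x y) \<Longrightarrow> pair_op t f x y \<le> pair_op t g x y"
  unfolding pair_op_def by (intro divide_right_mono sum_mono mult_left_mono) auto

lemma pair_op_power_add: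
  "(pair_op t ^^ n) (\<lambda>x y. f x y + g x y) = (\<lambda>x y. (pair_op t ^^ n) f x y + (pair_op t ^^ n) g x y)"
  by (induction n) (simp_all add: pair_op_add)

lemma pair_op_power_cmult: "(pair_op t ^^ n) (\<lambda>x y. c * f x y) = (\<lambda>x y. c * (pair_op t ^^ n) f x y)"
  by (induction n) (simp_all add: pair_op_cmult)

lemma pair_op_power_mono:
  "t \<ge> 0 \<Longrightarrow> (\<And>x y. f x y \<le> g x y) \<Longrightarrow> (pair_op t ^^ n) f x y \<le> (pair_op t ^^ n) g x y"
  by (induction n arbitrary: x y) (auto intro!: pair_op_mono)

definition walk_pair_sum ::
    "real \<Rightarrow> (int \<times> int \<Rightarrow> int \<times> int \<Rightarrow> real) \<Rightarrow> nat \<Rightarrow> int \<times> int \<Rightarrow> int \<times> int \<Rightarrow> real" where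
  "walk_pair_sum t f N x y = (\<Sum>w\<in>walks N. \<Sum>w'\<in>walks N.
      (\<Prod>n=1..N. 1 + t * (if x + w n = y + w' n then 1 else 0)) * f (x + w N) (y + w' N))"

lemma prod_walk_cons:
  assumes "v \<in> walks N" and "v' \<in> walks N"
  shows "(\<Prod>n=1..Suc N. F (walk_cons s v N n) (walk_cons s' v' N n))
    = F s s' * (\<Prod>n=1..N. F (s + v n) (s' + v' n))"
proof -
  have "v 0 = 0" "v' 0 = 0" using assms unfolding walks_def by (auto simp: zero_prod_def)
  then have "(\<Prod>n=1..Suc N. F (walk_cons s v N n) (walk_cons s' v' N n))
      = F s s' * (\<Prod>n=Suc 1..Suc N. F (walk_cons s v N n) (walk_cons s' v' N n))"
    by (subst prod.atLeast_Suc_atMost) (simp_all add: walk_cons_def)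
  also have "(\<Prod>n=Suc 1..Suc N. F (walk_cons s v N n) (walk_cons s' v' N n))
      = (\<Prod>n=1..N. F (s + v n) (s' + v' n))"
    unfolding prod.shift_bounds_cl_Suc_ivl by (intro prod.cong) (auto simp: walk_cons_def)
  finally show ?thesis .
qed

lemma walk_pair_sum_0: "walk_pair_sum t f 0 x y = f x y"
  by (simp add: walk_pair_sum_def walks_0 zero_prod_def[symmetric])

lemma walk_pair_sum_Suc:
  "walk_pair_sum t f (Suc N) x y = (\<Sum>s\<in>unit_steps. \<Sum>s'\<in>unit_steps.
      (1 + t * (if x + s = y + s' then 1 else 0)) * walk_pair_sum t f N (x + s) (y + s'))"
proof -
  have "walk_pair_sum t f (Suc N) x y
      = (\<Sum>s\<in>unit_steps. \<Sum>v\<in>walks N. \<Sum>s'\<in>unit_steps. \<Sum>v'\<in>walks N.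
      (1 + t * (if x + s = y + s' then 1 else 0))
      * ((\<Prod>n=1..N. 1 + t * (if (x + s) + v n = (y + s') + v' n then 1 else 0))
         * f ((x + s) + v N) ((y + s') + v' N)))"
    unfolding walk_pair_sum_def sum_walks_Suc
  proof (intro sum.cong refl, goal_cases)
    case (1 s v s' v')
    have "walk_cons a u N (Suc N) = a + u N" for a u by (simp add: walk_cons_def)
    then show ?case
      unfolding prod_walk_cons[OF 1(2,4), where F="\<lambda>a b. 1 + t * (if x + a = y + b then 1 else 0)"]
      by (simp add: add.assoc mult.assoc)
  qed
  then show ?thesis
    unfolding walk_pair_sum_def by (simp add: sum_distrib_left sum.swap[of _ "walks N" unit_steps])
qed

lemma walk_pair_sum_eq_pair_op_power: "walk_pair_sum t f N x y / 16^N = (pair_op t ^^ N) f x y"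
proof (induction N arbitrary: x y)
  case (Suc N)
  have "walk_pair_sum t f (Suc N) x y / 16 ^ Suc N = (\<Sum>s\<in>unit_steps. \<Sum>s'\<in>unit_steps.
      (1 + t * (if x + s = y + s' then 1 else 0)) * (walk_pair_sum t f N (x + s) (y + s') / 16^N)) / 16"
    unfolding walk_pair_sum_Suc by (simp add: sum_divide_distrib mult.commute)
  then show ?case by (simp add: Suc pair_op_def)
qed (simp add: walk_pair_sum_0)

definition diff_op :: "real \<Rightarrow> (int \<times> int \<Rightarrow> real) \<Rightarrow> int \<times> int \<Rightarrow> real" where
  "diff_op t g z = (\<Sum>s\<in>unit_steps. \<Sum>s'\<in>unit_steps.
      (1 + t * (if z + s - s' = 0 then 1 else 0)) * g (z + s - s')) / 16"

definition collision_moment :: "real \<Rightarrow> nat \<Rightarrow> int \<times> int \<Rightarrow> real" where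
  "collision_moment t n = (diff_op t ^^ n) (\<lambda>_. 1)"

lemma add_eq_add_iff_diff: "x + s = y + s' \<longleftrightarrow> x - y + (s - s') = (0::'a::ab_group_add)"
  by (metis add_diff_add eq_iff_diff_eq_0)

lemma pair_op_diff: "pair_op t (\<lambda>x y. g (x - y)) x y = diff_op t g (x - y)"
  unfolding pair_op_def diff_op_def add_eq_add_iff_diff add_diff_add add_diff_eq ..

lemma pair_op_power_diff: "(pair_op t ^^ n) (\<lambda>x y. g (x - y)) = (\<lambda>x y. (diff_op t ^^ n) g (x - y))"
  by (induction n) (simp_all add: pair_op_diff)

lemma diff_op_add: "diff_op t (\<lambda>z. f z + g z) z = diff_op t f z + diff_op t g z"
  unfolding diff_op_def by (simp add: sum.distrib algebra_simps add_divide_distrib)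

lemma diff_op_cmult: "diff_op t (\<lambda>z. c * f z) z = c * diff_op t f z"
  unfolding diff_op_def by (simp add: sum_distrib_left algebra_simps)

lemma diff_op_power_add:
  "(diff_op t ^^ n) (\<lambda>z. f z + g z) = (\<lambda>z. (diff_op t ^^ n) f z + (diff_op t ^^ n) g z)"
  by (induction n) (simp_all add: diff_op_add)

lemma diff_op_power_cmult: "(diff_op t ^^ n) (\<lambda>z. c * f z) = (\<lambda>z. c * (diff_op t ^^ n) f z)"
  by (induction n) (simp_all add: diff_op_cmult)

lemma diff_op_nonneg: "t \<ge> 0 \<Longrightarrow> (\<And>z. g z \<ge> 0) \<Longrightarrow> diff_op t g z \<ge> 0"
  unfolding diff_op_def by (intro divide_nonneg_pos sum_nonneg mult_nonneg_nonneg) auto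

lemma diff_op_power_nonneg: "t \<ge> 0 \<Longrightarrow> (\<And>z. g z \<ge> 0) \<Longrightarrow> (diff_op t ^^ n) g z \<ge> 0"
  by (induction n arbitrary: z) (auto intro!: diff_op_nonneg)

lemma collision_moment_nonneg: "t \<ge> 0 \<Longrightarrow> collision_moment t n z \<ge> 0"
  unfolding collision_moment_def by (rule diff_op_power_nonneg) auto

definition sqnorm :: "int \<times> int \<Rightarrow> real" where
  "sqnorm z = real_of_int (fst z)^2 + real_of_int (snd z)^2"

lemma Z_second_moment: "(\<integral>\<eta>. (Zpart c N \<eta>)^2 \<partial>Qenv) = collision_moment ((c N)^2) N 0"
proof -
  have "(\<integral>\<eta>. (Zpart c N \<eta>)^2 \<partial>Qenv) = walk_pair_sum ((c N)^2) (\<lambda>x y. 1) N 0 0 / 16^N"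
    using integral_Qenv_walk_sum_square[where h="\<lambda>_. 1" and c="c N" and N=N]
    by (simp add: Zpart_def walk_pair_sum_def)
  also have "\<dots> = collision_moment ((c N)^2) N 0"
    using pair_op_power_diff[where g="\<lambda>_. 1" and t="(c N)^2" and n=N]
    by (simp add: walk_pair_sum_eq_pair_op_power collision_moment_def)
  finally show ?thesis .
qed

lemma K_second_moment:
  "(\<integral>\<eta>. (Kpart c N \<eta>)^2 \<partial>Qenv) = (pair_op ((c N)^2) ^^ N) (\<lambda>x y. sqnorm x * sqnorm y) 0 0"
proof -
  have "(\<integral>\<eta>. (Kpart c N \<eta>)^2 \<partial>Qenv) = walk_pair_sum ((c N)^2) (\<lambda>x y. sqnorm x * sqnorm y) N 0 0 / 16^N"
    using integral_Qenv_walk_sum_square[where h="\<lambda>w. sqnorm (w N)" and c="c N" and N=N]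
    by (simp add: Kpart_def walk_pair_sum_def sqnorm_def)
  then show ?thesis by (simp add: walk_pair_sum_eq_pair_op_power)
qed

section \<open>Meeting probabilities\<close>

text \<open>\<open>meet_prob m z\<close> is the probability that two independent walks started at offset \<open>z\<close>
  occupy the same site at time \<open>m\<close>.\<close>

fun meet_prob :: "nat \<Rightarrow> int \<times> int \<Rightarrow> real" where
  "meet_prob 0 z = (if z = 0 then 1 else 0)"
| "meet_prob (Suc m) z = (\<Sum>s\<in>unit_steps. \<Sum>s'\<in>unit_steps. meet_prob m (z + s - s')) / 16"

fun lazy_meet_prob :: "nat \<Rightarrow> int \<Rightarrow> real" where
  "lazy_meet_prob 0 a = (if a = 0 then 1 else 0)"
| "lazy_meet_prob (Suc m) a =
    (lazy_meet_prob m (a + 2) + 2 * lazy_meet_prob m a + lazy_meet_prob m (a - 2)) / 4"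

declare meet_prob.simps(2)[simp del] lazy_meet_prob.simps(2)[simp del]

text \<open>In the rotated coordinates \<open>p + q\<close> and \<open>p - q\<close> the difference of the two walks moves as two
  independent lazy walks with steps \<open>\<plusminus>2\<close>.\<close>

lemma meet_prob_rotate: "meet_prob m (p,q) = lazy_meet_prob m (p+q) * lazy_meet_prob m (p-q)"
proof (induction m arbitrary: p q)
  case (Suc m)
  show ?case
    by (simp add: meet_prob.simps lazy_meet_prob.simps sum_unit_steps Suc algebra_simps)
qed (auto simp: zero_prod_def)

lemma lazy_meet_prob_even:
  "lazy_meet_prob m (2*j) = (if j < - int m then 0 else real (2*m choose nat (int m + j)) / 4^m)"
proof (induction m arbitrary: j)
  case 0
  then show ?case by auto
next
  case (Suc m)
  have e1: "2*j+2 = 2*(j+1)" "2*j - 2 = 2*(j-1)" by auto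
  have rr: "lazy_meet_prob (Suc m) (2*j)
      = (lazy_meet_prob m (2*(j+1)) + 2 * lazy_meet_prob m (2*j) + lazy_meet_prob m (2*(j-1))) / 4"
    by (simp only: lazy_meet_prob.simps(2) e1)
  consider "j < - int m - 1" | "j = - int m - 1" | "j = - int m" | "j > - int m" by linarith
  then show ?case
  proof cases
    case 1 then show ?thesis unfolding rr Suc by simp
  next
    case 2
    have "nat (int (Suc m) + j) = 0" "nat (int m + (j+1)) = 0" using 2 by auto
    then show ?thesis unfolding rr Suc using 2 by simp
  next
    case 3
    have "nat (int (Suc m) + j) = 1" "nat (int m + (j+1)) = 1" "nat (int m + j) = 0" using 3 by auto
    then show ?thesis unfolding rr Suc using 3 by (simp add: field_simps)
  next
    case 4
    define k where "k = nat (int m + j) - 1"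
    have k1: "nat (int (Suc m) + j) = Suc (Suc k)" "nat (int m + (j+1)) = Suc (Suc k)"
      "nat (int m + j) = Suc k" "nat (int m + (j-1)) = k" using 4 by (auto simp: k_def)
    have "real (2 * Suc m choose Suc (Suc k))
        = real (2*m choose k) + 2 * real (2*m choose Suc k) + real (2*m choose Suc (Suc k))"
      by (simp add: numeral_2_eq_2)
    then show ?thesis unfolding rr Suc using 4 k1 by (simp add: field_simps)
  qed
qed

lemma lazy_meet_prob_0: "lazy_meet_prob m 0 = real (2*m choose m) / 4^m"
  using lazy_meet_prob_even[of m 0] by simp

lemma central_binomial_Suc: "(2*Suc m choose Suc m) * Suc m = 2*(2*m+1)*(2*m choose m)"
proof -
  have a: "Suc (2*m+1) * (2*m+1 choose m) = (Suc (2*m+1) choose Suc m) * Suc m"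
    by (rule Suc_times_binomial_eq)
  have b: "Suc (2*m) * (2*m choose m) = (Suc (2*m) choose Suc m) * Suc m"
    by (rule Suc_times_binomial_eq)
  have c: "(2*m+1 choose m) = (2*m+1 choose Suc m)"
    using binomial_symmetric[of m "2*m+1"] by (simp add: Suc_diff_le)
  have e: "Suc (2*m+1) = 2*Suc m" "Suc (2*m) = 2*m+1" by auto
  define X where "X = (2*Suc m choose Suc m)"
  define Y where "Y = (2*m+1 choose m)"
  define Z where "Z = (2*m choose m)"
  have a': "X * Suc m = 2*Suc m * Y" using a unfolding e X_def Y_def by simp
  have b': "(2*m+1) * Z = Y * Suc m" using b c unfolding e Y_def Z_def by simp
  have "X * Suc m * Suc m = 2*Suc m * (Y * Suc m)" using a' by simp
  also have "\<dots> = 2 * Suc m * ((2*m+1) * Z)" using b' by simp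
  finally have "X * Suc m * Suc m = (2*(2*m+1)* Z) * Suc m" by (simp add: algebra_simps)
  then have "X * Suc m = 2*(2*m+1)* Z" by (simp only: mult_right_cancel)
  then show ?thesis unfolding X_def Z_def by (simp only:)
qed

lemma lazy_meet_prob_0_Suc: "lazy_meet_prob (Suc m) 0 = lazy_meet_prob m 0 * (2*m+1) / (2*m+2)"
proof -
  define X Z where "X = real (2*Suc m choose Suc m)" and "Z = real (2*m choose m)"
  have "X * (real m + 1) = 2 * (2 * real m + 1) * Z"
    using arg_cong[OF central_binomial_Suc[of m], of real] by (simp add: X_def Z_def algebra_simps)
  then have X: "X = 2 * (2 * real m + 1) * Z / (real m + 1)"
    by (simp add: field_simps)
  have L: "lazy_meet_prob (Suc m) 0 = X / 4^Suc m" "lazy_meet_prob m 0 = Z / 4^m"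
    unfolding X_def Z_def by (rule lazy_meet_prob_0)+
  show ?thesis unfolding L X by (simp add: divide_simps) (simp add: algebra_simps)
qed

lemma lazy_meet_prob_0_sq_le: "(lazy_meet_prob m 0)^2 \<le> 1 / (2 * real m + 1)"
proof (induction m)
  case (Suc m)
  have "(lazy_meet_prob (Suc m) 0)^2 = (lazy_meet_prob m 0)^2 * ((2*real m+1)/(2*real m+2))^2"
    unfolding lazy_meet_prob_0_Suc by (simp add: power_mult_distrib power_divide add.commute)
  also have "\<dots> \<le> 1 / (2*real m+1) * ((2*real m+1)/(2*real m+2))^2"
    by (rule mult_right_mono[OF Suc]) simp
  also have "\<dots> = (2*real m+1) / ((2*real m+2) * (2*real m+2))"
    by (simp add: power2_eq_square divide_simps)
  also have "\<dots> \<le> 1 / (2 * real (Suc m) + 1)"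
    by (simp add: divide_simps) (simp add: algebra_simps)
  finally show ?case .
qed simp

lemma meet_prob_0_le: "meet_prob (Suc m) 0 \<le> inverse (real (Suc m))"
proof -
  have "meet_prob (Suc m) 0 = (lazy_meet_prob (Suc m) 0)^2" using meet_prob_rotate[of "Suc m" 0 0]
    by (simp only: zero_prod_def power2_eq_square) simp
  also have "\<dots> \<le> 1 / (2 * real (Suc m) + 1)" by (rule lazy_meet_prob_0_sq_le)
  also have "\<dots> \<le> inverse (real (Suc m))" by (simp add: field_simps)
  finally show ?thesis .
qed

lemma meet_prob_nonneg: "meet_prob m z \<ge> 0"
  by (induction m arbitrary: z) (auto simp: meet_prob.simps intro!: sum_nonneg)

lemma meet_prob_1:
  "meet_prob 1 z = (\<Sum>s\<in>unit_steps. \<Sum>s'\<in>unit_steps. if z + s - s' = 0 then 1 else 0) / 16"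
  by (simp add: meet_prob.simps)

section \<open>The renewal equation and the bound on the second moment of \<open>Z(N)\<close>\<close>

lemma sum_unit_step_pairs_const: "(\<Sum>s\<in>unit_steps. \<Sum>s'\<in>unit_steps. (a::real)) = 16 * a"
  by (simp add: unit_steps_def)

lemma collision_moment_0 [simp]: "collision_moment t 0 z = 1"
  by (simp add: collision_moment_def)

lemma collision_moment_Suc: "collision_moment t (Suc n) z = diff_op t (collision_moment t n) z"
  by (simp add: collision_moment_def)

lemma diff_op_one: "diff_op t (\<lambda>_. 1) z = 1 + t * meet_prob 1 z"
proof -
  have "diff_op t (\<lambda>_. 1) z
      = (\<Sum>s\<in>unit_steps. \<Sum>s'\<in>unit_steps. 1 + t * (if z + s - s' = 0 then 1 else 0)) / 16"
    unfolding diff_op_def by simp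
  also have "\<dots> = 1 + t * ((\<Sum>s\<in>unit_steps. \<Sum>s'\<in>unit_steps. (if z + s - s' = 0 then 1 else 0)) / 16)"
    by (simp add: sum.distrib sum_distrib_left[symmetric] card_unit_steps add_divide_distrib)
  also have "(\<Sum>s\<in>unit_steps. \<Sum>s'\<in>unit_steps. (if z + s - s' = 0 then 1 else 0)) / 16 = meet_prob 1 z"
    by (simp add: meet_prob.simps)
  finally show ?thesis .
qed

lemma collision_moment_sum:
  "collision_moment t n z = 1 + t * (\<Sum>j<n. (diff_op t ^^ j) (meet_prob 1) z)"
proof (induction n arbitrary: z)
  case 0 then show ?case by (simp add: collision_moment_def)
next
  case (Suc n)
  have "collision_moment t (Suc n) z = (diff_op t ^^ n) (diff_op t (\<lambda>_. 1)) z"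
    unfolding collision_moment_def by (simp only: funpow_Suc_right comp_def)
  also have "diff_op t (\<lambda>_. 1) = (\<lambda>z. 1 + t * meet_prob 1 z)" by (intro ext) (rule diff_op_one)
  also have "(diff_op t ^^ n) (\<lambda>z. 1 + t * meet_prob 1 z) z
      = collision_moment t n z + t * (diff_op t ^^ n) (meet_prob 1) z"
    unfolding collision_moment_def by (simp only: diff_op_power_add diff_op_power_cmult)
  finally show ?case using Suc by (simp add: algebra_simps)
qed

text \<open>Expand \<open>\<Prod>\<^sub>k (1 + t [the walks meet at time k])\<close> and group the terms by the first
  time contributing the factor \<open>t\<close>; from that time on the two walks restart from a common site.\<close>

lemma collision_moment_renewal:
  "collision_moment t n z = 1 + t * (\<Sum>m<n. meet_prob (Suc m) z * collision_moment t (n - Suc m) 0)"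
proof (induction n arbitrary: z)
  case (Suc n)
  let ?F = "\<lambda>m. collision_moment t (n - Suc m) 0"
  have split: "(1 + t * (if z + s - s' = 0 then 1 else 0)) * collision_moment t n (z + s - s')
      = collision_moment t n (z + s - s')
        + t * ((if z + s - s' = 0 then 1 else 0) * collision_moment t n 0)"
    for s s'
    by (auto simp: algebra_simps)
  have "collision_moment t (Suc n) z
      = (\<Sum>s\<in>unit_steps. \<Sum>s'\<in>unit_steps. collision_moment t n (z + s - s')) / 16
        + t * (meet_prob 1 z * collision_moment t n 0)"
    unfolding collision_moment_Suc diff_op_def split meet_prob_1
    by (simp add: sum.distrib sum_distrib_left sum_distrib_right add_divide_distrib algebra_simps)
  also have "(\<Sum>s\<in>unit_steps. \<Sum>s'\<in>unit_steps. collision_moment t n (z + s - s')) / 16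
      = 1 + t * (\<Sum>m<n. meet_prob (Suc (Suc m)) z * ?F m)"
    unfolding Suc meet_prob.simps(2)
    by (simp add: sum.distrib sum_distrib_left sum_distrib_right sum_unit_step_pairs_const
        card_unit_steps add_divide_distrib sum_divide_distrib[symmetric]
        sum.swap[of _ unit_steps "{..<n}"] algebra_simps)
  finally have "collision_moment t (Suc n) z
      = 1 + t * (meet_prob 1 z * collision_moment t n 0 + (\<Sum>m<n. meet_prob (Suc (Suc m)) z * ?F m))"
    by (simp add: algebra_simps)
  also have "meet_prob 1 z * collision_moment t n 0 + (\<Sum>m<n. meet_prob (Suc (Suc m)) z * ?F m)
      = (\<Sum>m<Suc n. meet_prob (Suc m) z * collision_moment t (Suc n - Suc m) 0)"
    by (subst sum.lessThan_Suc_shift) simp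
  finally show ?case .
qed simp

lemma collision_moment_0_le:
  assumes t: "t \<ge> 0" and "n \<le> N"
  shows "collision_moment t n 0 \<le> (\<Sum>k\<le>n. (t * harm N)^k)"
  using \<open>n \<le> N\<close>
proof (induction n rule: less_induct)
  case (less n)
  define S where "S j = (\<Sum>k\<le>j. (t * harm N)^k)" for j
  have S_nonneg: "S j \<ge> 0" for j
    unfolding S_def using t by (auto intro!: sum_nonneg simp: harm_nonneg)
  have S_mono: "S i \<le> S j" if "i \<le> j" for i j
    unfolding S_def using that t by (intro sum_mono2) (auto simp: harm_nonneg)
  show ?case
  proof (cases n)
    case (Suc n')
    have IH: "collision_moment t (n - Suc m) 0 \<le> S n'" if "m < n" for m
    proof -
      have "n - Suc m < n" "n - Suc m \<le> N" using that less.prems by auto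
      then have "collision_moment t (n - Suc m) 0 \<le> S (n - Suc m)"
        unfolding S_def by (rule less.IH)
      also have "\<dots> \<le> S n'" using S_mono Suc by simp
      finally show ?thesis .
    qed
    have "collision_moment t n 0
        = 1 + t * (\<Sum>m<n. meet_prob (Suc m) 0 * collision_moment t (n - Suc m) 0)"
      by (rule collision_moment_renewal)
    also have "\<dots> \<le> 1 + t * (\<Sum>m<n. inverse (real (Suc m)) * S n')"
      using t IH S_nonneg
      by (intro add_left_mono mult_left_mono sum_mono mult_mono meet_prob_0_le)
         (auto simp: collision_moment_nonneg)
    also have "\<dots> = 1 + t * harm n * S n'"
      by (simp add: harm_altdef sum_distrib_right)
    also have "\<dots> \<le> 1 + t * harm N * S n'"
      using less.prems t S_nonneg by (intro add_left_mono mult_right_mono mult_left_mono harm_mono) auto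
    also have "\<dots> = S n"
      unfolding S_def Suc by (simp add: sum.atMost_Suc_shift sum_distrib_left del: sum.atMost_Suc)
    finally show ?thesis unfolding S_def .
  qed simp
qed

lemma harm_le_3_ln:
  assumes "N \<ge> 2"
  shows "harm N \<le> 3 * ln (real N)"
proof -
  have "harm N \<le> 1 + ln (real N)"
    using euler_mascheroni_sequence_decreasing[of 1 N] assms by (simp add: harm_def)
  moreover have "ln 2 \<le> ln (real N)"
    using assms by simp
  ultimately show ?thesis using ln2_ge_two_thirds by linarith
qed

lemma Z_second_moment_le:
  assumes "N \<ge> 2" and "C \<ge> 3"
  shows "(\<integral>\<eta>. (Zpart c N \<eta>)^2 \<partial>Qenv) \<le> (\<Sum>k\<le>N. (C * (c N)^2 * ln (real N))^k)"
proof -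
  have "(\<integral>\<eta>. (Zpart c N \<eta>)^2 \<partial>Qenv) \<le> (\<Sum>k\<le>N. ((c N)^2 * harm N)^k)"
    unfolding Z_second_moment by (rule collision_moment_0_le) auto
  also have "\<dots> \<le> (\<Sum>k\<le>N. (C * (c N)^2 * ln (real N))^k)"
  proof (intro sum_mono power_mono)
    have "3 * ln (real N) \<le> C * ln (real N)"
      using assms by (intro mult_right_mono) auto
    then have "harm N \<le> C * ln (real N)"
      using harm_le_3_ln[OF assms(1)] by linarith
    then have "(c N)^2 * harm N \<le> (c N)^2 * (C * ln (real N))"
      by (rule mult_left_mono) simp
    then show "(c N)^2 * harm N \<le> C * (c N)^2 * ln (real N)"
      by (simp only: ac_simps)
  qed (simp add: harm_nonneg)
  finally show ?thesis .
qed

section \<open>The bound on the second moment of \<open>K(N)\<close>\<close>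

lemma sqnorm_nonneg: "sqnorm z \<ge> 0"
  unfolding sqnorm_def by simp

definition quartic_weight :: "real \<Rightarrow> int \<times> int \<Rightarrow> real" where
  "quartic_weight r U = (sqnorm U + 12 * r)^2"

lemma sqnorm_double: "sqnorm (w + w) = 4 * sqnorm w"
  by (simp add: sqnorm_def power2_eq_square algebra_simps)

lemma quartic_weight_pair_le:
  assumes r: "r \<ge> 0" and v: "sqnorm v \<le> 4"
  shows "quartic_weight r (U + v) + quartic_weight r (U - v) \<le> 2 * quartic_weight (r + 1) U"
proof -
  obtain a b where U: "U = (a, b)" by (cases U)
  obtain p q where pq: "v = (p, q)" by (cases v)
  define A where "A = sqnorm U + 12 * r"
  define dot where "dot = real_of_int a * real_of_int p + real_of_int b * real_of_int q"
  have A: "sqnorm U \<le> A" using r by (simp add: A_def)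
  have expand: "quartic_weight r (U + v) + quartic_weight r (U - v) = 2 * (A + sqnorm v)^2 + 8 * dot^2"
    by (simp add: U pq A_def dot_def quartic_weight_def sqnorm_def power2_eq_square algebra_simps)
  have "sqnorm U * sqnorm v - dot^2 = (real_of_int a * real_of_int q - real_of_int b * real_of_int p)^2"
    by (simp add: U pq dot_def sqnorm_def power2_eq_square algebra_simps)
  then have "dot^2 \<le> sqnorm U * sqnorm v"
    using zero_le_power2[of "real_of_int a * real_of_int q - real_of_int b * real_of_int p"] by linarith
  also have "\<dots> \<le> sqnorm U * 4"
    using v sqnorm_nonneg[of U] by (rule mult_left_mono)
  finally have dot: "dot^2 \<le> 4 * A" using A by linarith
  have "(A + sqnorm v)^2 \<le> (A + 4)^2"
    using v A sqnorm_nonneg[of v] sqnorm_nonneg[of U] by (intro power_mono) auto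
  moreover have "(A + 12)^2 = (A + 4)^2 + 16 * A + 128"
    by (simp add: power2_eq_square algebra_simps)
  moreover have "quartic_weight (r + 1) U = (A + 12)^2"
    by (simp add: quartic_weight_def A_def algebra_simps)
  ultimately show ?thesis
    unfolding expand using dot by linarith
qed

text \<open>The reflection \<open>(s, s') \<mapsto> (-s', -s)\<close> preserves \<open>s - s'\<close> and negates \<open>s + s'\<close>, so the
  steps \<open>s + s'\<close> of the centre of mass can be paired with their negatives.\<close>

lemma quartic_weight_average_le:
  assumes \<phi>: "\<And>d. \<phi> d \<ge> 0" and r: "r \<ge> 0"
  shows "(\<Sum>s\<in>unit_steps. \<Sum>s'\<in>unit_steps. \<phi> (s - s') * quartic_weight r (U + (s + s')))
    \<le> (\<Sum>s\<in>unit_steps. \<Sum>s'\<in>unit_steps. \<phi> (s - s')) * quartic_weight (r + 1) U"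
proof -
  have "(\<Sum>s\<in>unit_steps. \<Sum>s'\<in>unit_steps. \<phi> (s - s') * quartic_weight r (U - (s + s')))
      = (\<Sum>s'\<in>unit_steps. \<Sum>s\<in>unit_steps. \<phi> (s - s') * quartic_weight r (U - (s + s')))"
    by (rule sum.swap)
  also have "\<dots> = (\<Sum>s\<in>uminus ` unit_steps. \<Sum>s'\<in>uminus ` unit_steps.
      \<phi> (s - s') * quartic_weight r (U + (s + s')))"
    by (simp add: sum.reindex algebra_simps)
  also have "uminus ` unit_steps = unit_steps"
    by (auto simp: unit_steps_def image_iff)
  finally have reflect: "(\<Sum>s\<in>unit_steps. \<Sum>s'\<in>unit_steps. \<phi> (s - s') * quartic_weight r (U - (s + s')))
      = (\<Sum>s\<in>unit_steps. \<Sum>s'\<in>unit_steps. \<phi> (s - s') * quartic_weight r (U + (s + s')))" .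
  have "2 * (\<Sum>s\<in>unit_steps. \<Sum>s'\<in>unit_steps. \<phi> (s - s') * quartic_weight r (U + (s + s')))
      = (\<Sum>s\<in>unit_steps. \<Sum>s'\<in>unit_steps.
          \<phi> (s - s') * (quartic_weight r (U + (s + s')) + quartic_weight r (U - (s + s'))))"
    unfolding distrib_left sum.distrib reflect by simp
  also have "\<dots> \<le> (\<Sum>s\<in>unit_steps. \<Sum>s'\<in>unit_steps. \<phi> (s - s') * (2 * quartic_weight (r + 1) U))"
    using \<phi> r
    by (intro sum_mono mult_left_mono quartic_weight_pair_le) (auto simp: unit_steps_def sqnorm_def)
  also have "\<dots> = 2 * ((\<Sum>s\<in>unit_steps. \<Sum>s'\<in>unit_steps. \<phi> (s - s')) * quartic_weight (r + 1) U)"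
    by (simp add: sum_distrib_left sum_distrib_right ac_simps)
  finally show ?thesis by simp
qed

lemma pair_op_product_le:
  assumes t: "t \<ge> 0" and g: "\<And>z. g z \<ge> 0" and r: "r \<ge> 0"
  shows "pair_op t (\<lambda>x y. g (x - y) * quartic_weight r (x + y)) x y
    \<le> diff_op t g (x - y) * quartic_weight (r + 1) (x + y)"
proof -
  define \<phi> where "\<phi> d = (1 + t * (if x - y + d = 0 then 1 else 0)) * g (x - y + d)" for d
  have centre: "x + s + (y + s') = x + y + (s + s')" for s s' :: "int \<times> int"
    by (simp add: ac_simps)
  have "pair_op t (\<lambda>x y. g (x - y) * quartic_weight r (x + y)) x y
      = (\<Sum>s\<in>unit_steps. \<Sum>s'\<in>unit_steps. \<phi> (s - s') * quartic_weight r (x + y + (s + s'))) / 16"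
    unfolding pair_op_def \<phi>_def add_eq_add_iff_diff add_diff_add centre mult.assoc ..
  also have "\<dots> \<le> (\<Sum>s\<in>unit_steps. \<Sum>s'\<in>unit_steps. \<phi> (s - s')) * quartic_weight (r + 1) (x + y) / 16"
    using t g r by (intro divide_right_mono quartic_weight_average_le) (auto simp: \<phi>_def)
  also have "(\<Sum>s\<in>unit_steps. \<Sum>s'\<in>unit_steps. \<phi> (s - s')) = 16 * diff_op t g (x - y)"
    unfolding diff_op_def \<phi>_def by (simp add: add_diff_eq)
  finally show ?thesis by simp
qed

lemma pair_op_power_product_le:
  assumes t: "t \<ge> 0" and g: "\<And>z. g z \<ge> 0" and r: "r \<ge> 0"
  shows "(pair_op t ^^ n) (\<lambda>x y. g (x - y) * quartic_weight r (x + y)) x y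
    \<le> (diff_op t ^^ n) g (x - y) * quartic_weight (r + n) (x + y)"
proof (induction n arbitrary: x y)
  case (Suc n)
  have "(pair_op t ^^ Suc n) (\<lambda>x y. g (x - y) * quartic_weight r (x + y)) x y
      \<le> pair_op t (\<lambda>x y. (diff_op t ^^ n) g (x - y) * quartic_weight (r + n) (x + y)) x y"
    unfolding funpow.simps comp_def by (rule pair_op_mono[OF t Suc])
  also have "\<dots> \<le> diff_op t ((diff_op t ^^ n) g) (x - y) * quartic_weight (r + n + 1) (x + y)"
    using r by (intro pair_op_product_le[OF t] diff_op_power_nonneg[OF t g]) simp
  finally show ?case by (simp add: ac_simps)
qed simp

definition shifted_sqnorm_product :: "real \<Rightarrow> int \<times> int \<Rightarrow> int \<times> int \<Rightarrow> real" where
  "shifted_sqnorm_product r x y = (sqnorm x + r) * (sqnorm y + r)"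

definition collision_part :: "(int \<times> int \<Rightarrow> int \<times> int \<Rightarrow> real) \<Rightarrow> int \<times> int \<Rightarrow> int \<times> int \<Rightarrow> real" where
  "collision_part f x y = (\<Sum>s\<in>unit_steps. \<Sum>s'\<in>unit_steps.
      (if x + s = y + s' then 1 else 0) * f (x + s) (y + s')) / 16"

lemma sum_sqnorm_unit_steps: "(\<Sum>s\<in>unit_steps. sqnorm (x + s) + r) = 4 * (sqnorm x + r + 1)"
  by (cases x) (simp add: sum_unit_steps sqnorm_def power2_eq_square algebra_simps)

lemma pair_op_shifted_sqnorm_product:
  "pair_op t (shifted_sqnorm_product r) x y
    = shifted_sqnorm_product (r + 1) x y + t * collision_part (shifted_sqnorm_product r) x y"
proof -
  have "pair_op t (shifted_sqnorm_product r) x y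
      = (\<Sum>s\<in>unit_steps. \<Sum>s'\<in>unit_steps. shifted_sqnorm_product r (x + s) (y + s')) / 16
        + t * collision_part (shifted_sqnorm_product r) x y"
    unfolding pair_op_def collision_part_def
    by (simp add: distrib_right sum.distrib sum_distrib_left add_divide_distrib mult.assoc)
  also have "(\<Sum>s\<in>unit_steps. \<Sum>s'\<in>unit_steps. shifted_sqnorm_product r (x + s) (y + s'))
      = (\<Sum>s\<in>unit_steps. sqnorm (x + s) + r) * (\<Sum>s'\<in>unit_steps. sqnorm (y + s') + r)"
    unfolding shifted_sqnorm_product_def sum_product ..
  finally show ?thesis
    unfolding sum_sqnorm_unit_steps shifted_sqnorm_product_def by (simp add: algebra_simps)
qed

lemma pair_op_power_shifted_sqnorm_product:
  "(pair_op t ^^ n) (shifted_sqnorm_product r) x y = shifted_sqnorm_product (r + n) x y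
    + t * (\<Sum>j<n. (pair_op t ^^ (n - Suc j)) (collision_part (shifted_sqnorm_product (r + j))) x y)"
proof (induction n arbitrary: r x y)
  case (Suc n)
  have "pair_op t (shifted_sqnorm_product r)
      = (\<lambda>x y. shifted_sqnorm_product (r + 1) x y + t * collision_part (shifted_sqnorm_product r) x y)"
    by (intro ext) (rule pair_op_shifted_sqnorm_product)
  then have "(pair_op t ^^ Suc n) (shifted_sqnorm_product r) x y
      = (pair_op t ^^ n) (shifted_sqnorm_product (r + 1)) x y
        + t * (pair_op t ^^ n) (collision_part (shifted_sqnorm_product r)) x y"
    by (simp only: funpow_Suc_right comp_def pair_op_power_add pair_op_power_cmult)
  also have "\<dots> = shifted_sqnorm_product (r + Suc n) x y
      + t * (\<Sum>j<Suc n.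
          (pair_op t ^^ (Suc n - Suc j)) (collision_part (shifted_sqnorm_product (r + j))) x y)"
    unfolding Suc.IH by (subst sum.lessThan_Suc_shift) (simp add: algebra_simps)
  finally show ?case .
qed simp

lemma collision_part_le:
  assumes r: "r \<ge> 0"
  shows "collision_part (shifted_sqnorm_product r) x y
    \<le> meet_prob 1 (x - y) * (quartic_weight (r + 1) (x + y) / 16)"
proof -
  define \<phi> where "\<phi> d = (if x - y + d = 0 then 1 else 0::real)" for d
  have collision: "(if x + s = y + s' then 1 else 0) * shifted_sqnorm_product r (x + s) (y + s')
      \<le> \<phi> (s - s') * quartic_weight r (x + y + (s + s')) / 16" for s s'
  proof (cases "x + s = y + s'")
    case True
    then have centre: "x + y + (s + s') = (x + s) + (x + s)"
      by (metis add.assoc add.commute)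
    have "shifted_sqnorm_product r (x + s) (y + s') = (sqnorm (x + s) + r)^2"
      using True by (simp add: shifted_sqnorm_product_def power2_eq_square)
    also have "\<dots> \<le> (sqnorm (x + s) + 3 * r)^2"
      using r sqnorm_nonneg[of "x + s"] by (intro power_mono) auto
    also have "\<dots> = quartic_weight r (x + y + (s + s')) / 16"
      unfolding centre quartic_weight_def sqnorm_double by (simp add: power2_eq_square algebra_simps)
    finally show ?thesis
      using True by (simp add: \<phi>_def add_eq_add_iff_diff[symmetric])
  qed (simp add: \<phi>_def add_eq_add_iff_diff[symmetric])
  have "collision_part (shifted_sqnorm_product r) x y
      \<le> (\<Sum>s\<in>unit_steps. \<Sum>s'\<in>unit_steps. \<phi> (s - s') * quartic_weight r (x + y + (s + s')) / 16) / 16"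
    unfolding collision_part_def by (intro divide_right_mono sum_mono collision) auto
  also have "\<dots> = (\<Sum>s\<in>unit_steps. \<Sum>s'\<in>unit_steps. \<phi> (s - s') * quartic_weight r (x + y + (s + s'))) / 16 / 16"
    by (simp add: sum_divide_distrib)
  also have "\<dots> \<le> (\<Sum>s\<in>unit_steps. \<Sum>s'\<in>unit_steps. \<phi> (s - s')) * quartic_weight (r + 1) (x + y) / 16 / 16"
    using r by (intro divide_right_mono quartic_weight_average_le) (auto simp: \<phi>_def)
  also have "(\<Sum>s\<in>unit_steps. \<Sum>s'\<in>unit_steps. \<phi> (s - s')) = 16 * meet_prob 1 (x - y)"
    unfolding meet_prob_1 \<phi>_def by (simp add: add_diff_eq)
  finally show ?thesis by simp
qed

lemma pair_op_power_collision_part_le: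
  assumes t: "t \<ge> 0" and r: "r \<ge> 0"
  shows "(pair_op t ^^ n) (collision_part (shifted_sqnorm_product r)) x y
    \<le> (diff_op t ^^ n) (meet_prob 1) (x - y) * quartic_weight (r + 1 + n) (x + y) / 16"
proof -
  have "(pair_op t ^^ n) (collision_part (shifted_sqnorm_product r)) x y
      \<le> (pair_op t ^^ n) (\<lambda>x y. (1/16) * (meet_prob 1 (x - y) * quartic_weight (r + 1) (x + y))) x y"
    using collision_part_le[OF r] by (intro pair_op_power_mono[OF t]) simp
  also have "\<dots> \<le> (1/16) * ((diff_op t ^^ n) (meet_prob 1) (x - y) * quartic_weight (r + 1 + n) (x + y))"
    unfolding pair_op_power_cmult using r
    by (intro mult_left_mono pair_op_power_product_le[OF t]) (auto simp: meet_prob_nonneg)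
  finally show ?thesis by simp
qed

lemma pair_op_power_sqnorm_le:
  assumes t: "t \<ge> 0"
  shows "(pair_op t ^^ N) (\<lambda>x y. sqnorm x * sqnorm y) 0 0
    \<le> (real N)^2 + 9 * (real N)^2 * (collision_moment t N 0 - 1)"
proof -
  have collisions: "(pair_op t ^^ (N - Suc j)) (collision_part (shifted_sqnorm_product (real j))) 0 0
      \<le> 9 * (real N)^2 * (diff_op t ^^ (N - Suc j)) (meet_prob 1) 0"
    if "j < N" for j
  proof -
    have "real j + 1 + real (N - Suc j) = real N" using that by simp
    moreover have "quartic_weight (real N) 0 = 144 * (real N)^2"
      by (simp add: quartic_weight_def sqnorm_def power2_eq_square zero_prod_def)
    ultimately show ?thesis
      using pair_op_power_collision_part_le[OF t, of "real j" "N - Suc j" 0 0] by simp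
  qed
  have "(\<lambda>x y. sqnorm x * sqnorm y) = shifted_sqnorm_product 0"
    by (intro ext) (simp add: shifted_sqnorm_product_def)
  then have "(pair_op t ^^ N) (\<lambda>x y. sqnorm x * sqnorm y) 0 0 = (real N)^2
      + t * (\<Sum>j<N. (pair_op t ^^ (N - Suc j)) (collision_part (shifted_sqnorm_product (real j))) 0 0)"
    using pair_op_power_shifted_sqnorm_product[where t=t and n=N and r=0 and x=0 and y=0]
    by (simp add: shifted_sqnorm_product_def sqnorm_def power2_eq_square)
  also have "\<dots> \<le> (real N)^2 + t * (\<Sum>j<N. 9 * (real N)^2 * (diff_op t ^^ (N - Suc j)) (meet_prob 1) 0)"
    by (intro add_left_mono mult_left_mono sum_mono collisions t) auto
  also have "(\<Sum>j<N. 9 * (real N)^2 * (diff_op t ^^ (N - Suc j)) (meet_prob 1) 0)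
      = 9 * (real N)^2 * (\<Sum>j<N. (diff_op t ^^ j) (meet_prob 1) 0)"
    using sum.nat_diff_reindex[where g="\<lambda>j. (diff_op t ^^ j) (meet_prob 1) 0" and n=N]
    by (simp add: sum_distrib_left[symmetric])
  finally show ?thesis using collision_moment_sum[of t N 0] by (simp add: algebra_simps)
qed

lemma geometric_sum_scale_le:
  fixes x a :: real
  assumes "x \<ge> 0" "a \<ge> 1"
  shows "1 + a * ((\<Sum>k\<le>n. x^k) - 1) \<le> (\<Sum>k\<le>n. (a * x)^k)"
proof (induction n)
  case (Suc n)
  have "a * x^Suc n \<le> a^Suc n * x^Suc n"
    using assms by (intro mult_right_mono) (auto simp: power_increasing[of 1 "Suc n" a, simplified])
  then show ?case using Suc by (simp add: power_mult_distrib algebra_simps)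
qed simp

lemma K_second_moment_le:
  assumes "N \<ge> 2"
  shows "(\<integral>\<eta>. (Kpart c N \<eta>)^2 \<partial>Qenv) \<le> (real N)^2 * (\<Sum>k\<le>N. (27 * (c N)^2 * ln (real N))^k)"
proof -
  let ?x = "3 * (c N)^2 * ln (real N)"
  have x: "?x \<ge> 0" using assms by simp
  have Z_bound: "collision_moment ((c N)^2) N 0 \<le> (\<Sum>k\<le>N. ?x^k)"
    using Z_second_moment_le[OF assms, of 3 c] by (simp add: Z_second_moment)
  have "(\<integral>\<eta>. (Kpart c N \<eta>)^2 \<partial>Qenv) \<le> (real N)^2 + 9 * (real N)^2 * (collision_moment ((c N)^2) N 0 - 1)"
    unfolding K_second_moment by (rule pair_op_power_sqnorm_le) simp
  also have "\<dots> \<le> (real N)^2 * (1 + 9 * ((\<Sum>k\<le>N. ?x^k) - 1))"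
    using mult_left_mono[OF Z_bound, of "9 * (real N)^2"] by (simp add: algebra_simps)
  also have "\<dots> \<le> (real N)^2 * (\<Sum>k\<le>N. (9 * ?x)^k)"
    using x by (intro mult_left_mono geometric_sum_scale_le) auto
  finally show ?thesis by (simp add: mult.assoc)
qed

theorem proposition2:
  shows "\<exists>c2::real. c2 > 0 \<and>
    (\<forall>c::nat \<Rightarrow> real. (\<forall>N. c N > 0) \<longrightarrow> ((\<lambda>N. (c N)^2 * ln (real N)) \<longlonglongrightarrow> 0) \<longrightarrow>
      (\<forall>N::nat. N \<ge> 2 \<longrightarrow>
         (\<integral>eta. (Zpart c N eta)^2 \<partial>Qenv) \<le> (\<Sum>n=0..N. (c2 * (c N)^2 * ln (real N))^n)
       \<and> (\<integral>eta. (Kpart c N eta)^2 \<partial>Qenv) \<le> (real N)^2 * (\<Sum>n=0..N. (c2 * (c N)^2 * ln (real N))^n)))"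
proof (intro exI[of _ 27] conjI allI impI)
  fix c :: "nat \<Rightarrow> real" and N :: nat
  assume "N \<ge> 2"
  then show "(\<integral>eta. (Zpart c N eta)^2 \<partial>Qenv) \<le> (\<Sum>n=0..N. (27 * (c N)^2 * ln (real N))^n)"
    and "(\<integral>eta. (Kpart c N eta)^2 \<partial>Qenv) \<le> (real N)^2 * (\<Sum>n=0..N. (27 * (c N)^2 * ln (real N))^n)"
    unfolding atLeast0AtMost by (auto intro: Z_second_moment_le K_second_moment_le)
qed simp

end
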